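(* There is a function $C_6(t,\epsilon)$ such that the following holds for every positive integer $t$ and every $\epsilon\in(0,1)$: let $G$ be a connected bipartite graph with parts $A,B$, with $\delta(G)\geq C_6(t,\epsilon)$, which is induced $S_{t,t}$-free. Then for every $a\in A$ and $b\in B$ we have $|S_{N(a)}^{N(b)}(\epsilon)|\leq C_6(t,\epsilon)$.
   Context: For positive integers $a,b$, the biclaw $S_{a,b}$ is the graph with vertex set $\{x,x_1,\dots,x_a,y,y_1,\dots,y_b\}$ and edges $xy$, $xy_1,\dots,xy_b$, $yx_1,\dots,yx_a$. Induced $S_{t,t}$-free means no induced subgraph isomorphic to $S_{t,t}$. $N(v)$ is the neighbourhood of $v$, $\delta(G)$ the minimum degree. For vertex sets $X,Y$ and $\epsilon\in(0,1)$, $S_X^Y(\epsilon)=\{x\in X : |N(x)\cap Y|\leq (1-\epsilon)|Y|\}$. *)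

theory Defs
  imports Complex_Main
begin

definition graph :: "'a set \<Rightarrow> ('a \<Rightarrow> 'a \<Rightarrow> bool) \<Rightarrow> bool" where
  "graph V E \<longleftrightarrow> finite V \<and> (\<forall>u v. E u v \<longrightarrow> u \<in> V \<and> v \<in> V)
     \<and> (\<forall>u v. E u v \<longrightarrow> E v u) \<and> (\<forall>v. \<not> E v v)"

definition nbhd :: "'a set \<Rightarrow> ('a \<Rightarrow> 'a \<Rightarrow> bool) \<Rightarrow> 'a \<Rightarrow> 'a set" where
  "nbhd V E v = {u \<in> V. E v u}"

definition min_degree_ge :: "'a set \<Rightarrow> ('a \<Rightarrow> 'a \<Rightarrow> bool) \<Rightarrow> nat \<Rightarrow> bool" where
  "min_degree_ge V E d \<longleftrightarrow> (\<forall>v\<in>V. card (nbhd V E v) \<ge> d)"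

definition connected_graph :: "'a set \<Rightarrow> ('a \<Rightarrow> 'a \<Rightarrow> bool) \<Rightarrow> bool" where
  "connected_graph V E \<longleftrightarrow> V \<noteq> {} \<and> (\<forall>u\<in>V. \<forall>v\<in>V. (\<lambda>x y. E x y)\<^sup>*\<^sup>* u v)"

definition bipartition :: "'a set \<Rightarrow> ('a \<Rightarrow> 'a \<Rightarrow> bool) \<Rightarrow> 'a set \<Rightarrow> 'a set \<Rightarrow> bool" where
  "bipartition V E A B \<longleftrightarrow> A \<union> B = V \<and> A \<inter> B = {}
     \<and> (\<forall>u v. E u v \<longrightarrow> (u \<in> A \<and> v \<in> B) \<or> (u \<in> B \<and> v \<in> A))"

text \<open>Vertices of the biclaw S_{a,b}: X = x, Y = y, XL i = x_i (1..a), YL j = y_j (1..b).\<close>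
datatype bcv = X | Y | XL nat | YL nat

definition biclaw_V :: "nat \<Rightarrow> nat \<Rightarrow> bcv set" where
  "biclaw_V a b = {X, Y} \<union> XL ` {1..a} \<union> YL ` {1..b}"

fun biclaw_E0 :: "bcv \<Rightarrow> bcv \<Rightarrow> bool" where
  "biclaw_E0 X Y = True"
| "biclaw_E0 X (YL _) = True"
| "biclaw_E0 Y (XL _) = True"
| "biclaw_E0 _ _ = False"

definition biclaw_E :: "bcv \<Rightarrow> bcv \<Rightarrow> bool" where
  "biclaw_E u v \<longleftrightarrow> biclaw_E0 u v \<or> biclaw_E0 v u"

definition induced_sub :: "'b set \<Rightarrow> ('b \<Rightarrow> 'b \<Rightarrow> bool) \<Rightarrow> 'a set \<Rightarrow> ('a \<Rightarrow> 'a \<Rightarrow> bool) \<Rightarrow> bool" where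
  "induced_sub W F V E \<longleftrightarrow> (\<exists>f. inj_on f W \<and> f ` W \<subseteq> V \<and>
      (\<forall>u\<in>W. \<forall>v\<in>W. E (f u) (f v) \<longleftrightarrow> F u v))"

definition induced_biclaw_free :: "nat \<Rightarrow> 'a set \<Rightarrow> ('a \<Rightarrow> 'a \<Rightarrow> bool) \<Rightarrow> bool" where
  "induced_biclaw_free t V E \<longleftrightarrow> \<not> induced_sub (biclaw_V t t) biclaw_E V E"

definition S_set :: "'a set \<Rightarrow> ('a \<Rightarrow> 'a \<Rightarrow> bool) \<Rightarrow> 'a set \<Rightarrow> 'a set \<Rightarrow> real \<Rightarrow> 'a set" where
  "S_set V E Xs Ys eps = {x \<in> Xs. real (card (nbhd V E x \<inter> Ys)) \<le> (1 - eps) * real (card Ys)}"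

end

theory Submission
  imports Defs
begin

(* Call a vertex p of N(a) sparse towards N(b) if it lies in S_{N(a)}^{N(b)}(eps), i.e. misses an
   eps-fraction of N(b), and typical towards N(b) otherwise.

   Across an edge uv there are few sparse vertices of N(u) towards N(v): among many of them a greedy
   Kovari-Sos-Turan count finds t vertices with t common non-neighbours in N(v), and these two t-sets
   together with u and v span an induced S_{t,t}.

   The bound transfers along a walk a x y b. If many vertices of N(a) are sparse towards N(b), take t of
   them typical towards N(x), with t common non-neighbours in N(b) typical towards N(y). The first t
   vertices have many common neighbours in N(x), one of which, z, is typical towards N(y); z and the
   second t vertices have a common neighbour r in N(y), and the edge zr carries an induced S_{t,t}.

   With eps = 1/2 the transfer shows that the walks of length three starting at a extend to every vertex
   at distance two from their end, so by connectivity they reach all of B; the transfer with the given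
   eps then bounds S_{N(a)}^{N(b)}(eps). *)

lemma sum_card_filter_swap:
  assumes "finite S" "finite Q"
  shows "(\<Sum>q\<in>Q. card {p\<in>S. R p q}) = (\<Sum>p\<in>S. card {q\<in>Q. R p q})"
proof -
  have "(\<Sum>q\<in>Q. card {p\<in>S. R p q}) = (\<Sum>q\<in>Q. \<Sum>p\<in>S. if R p q then 1 else 0)"
    using assms by (simp add: sum.If_cases Int_def)
  also have "\<dots> = (\<Sum>p\<in>S. \<Sum>q\<in>Q. if R p q then 1 else 0)"
    by (rule sum.swap)
  also have "\<dots> = (\<Sum>p\<in>S. card {q\<in>Q. R p q})"
    using assms by (simp add: sum.If_cases Int_def)
  finally show ?thesis .
qed

lemma exists_ge_average:
  fixes f :: "'a \<Rightarrow> real"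
  assumes "finite A" "A \<noteq> {}" "real (card A) * M \<le> sum f A"
  shows "\<exists>x\<in>A. M \<le> f x"
proof (rule ccontr)
  assume "\<not> ?thesis"
  then have "sum f A < sum (\<lambda>_. M) A"
    using assms(1,2) by (intro sum_strict_mono) auto
  then show False
    using assms(3) by simp
qed

lemma card_filter_le_Diff_add:
  assumes "finite A" "finite B"
  shows "card {x\<in>A. P x} \<le> card {x\<in>A - B. P x} + card B"
proof -
  have "card {x\<in>A. P x} \<le> card ({x\<in>A - B. P x} \<union> B)"
    using assms by (intro card_mono) auto
  also have "\<dots> \<le> card {x\<in>A - B. P x} + card B"
    by (rule card_Un_le)
  finally show ?thesis .
qed

lemma exists_popular_partner:
  fixes R :: "'a \<Rightarrow> 'b \<Rightarrow> bool" and c :: real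
  assumes S: "finite S" "S \<noteq> {}" and Q: "finite Q" and c: "0 \<le> c"
    and partners: "\<forall>p\<in>S. c * card Q < card {q\<in>Q. R p q}"
  shows "\<exists>q\<in>Q. c * card S \<le> card {p\<in>S. R p q}"
proof -
  have "Q \<noteq> {}"
  proof
    assume "Q = {}"
    then show False
      using partners S(2) by simp
  qed
  have "real (card Q) * (c * card S) = (\<Sum>p\<in>S. c * card Q)"
    by simp
  also have "\<dots> \<le> (\<Sum>p\<in>S. real (card {q\<in>Q. R p q}))"
    using partners by (intro sum_mono) (simp add: less_imp_le)
  also have "\<dots> = (\<Sum>q\<in>Q. real (card {p\<in>S. R p q}))"
    using arg_cong[OF sum_card_filter_swap[OF S(1) Q, of R], of real] by simp
  finally show ?thesis
    by (rule exists_ge_average[OF Q \<open>Q \<noteq> {}\<close>])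
qed

lemma greedy_common_partners:
  fixes R :: "'a \<Rightarrow> 'b \<Rightarrow> bool" and c :: real
  assumes Q: "finite Q" and S: "finite S" "S \<noteq> {}" and c: "0 < c"
    and partners: "\<forall>p\<in>S. c * card Q + k \<le> card {q\<in>Q. R p q}"
  shows "\<exists>T\<subseteq>Q. card T = k \<and> c ^ k * card S \<le> card {p\<in>S. \<forall>q\<in>T. R p q}"
  using partners
proof (induction k)
  case 0
  show ?case
    by (intro exI[of _ "{}"]) auto
next
  case (Suc k)
  have "\<forall>p\<in>S. c * card Q + k \<le> card {q\<in>Q. R p q}"
    using Suc.prems by force
  then obtain T where T: "T \<subseteq> Q" "card T = k"
    and common: "c ^ k * card S \<le> card {p\<in>S. \<forall>q\<in>T. R p q}"
    using Suc.IH by blast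
  define ST where "ST = {p\<in>S. \<forall>q\<in>T. R p q}"
  have "finite ST" "finite T"
    using S Q T(1) finite_subset unfolding ST_def by auto
  have "0 < c ^ k * card S"
    using c S by (simp add: card_gt_0_iff)
  then have "ST \<noteq> {}"
    using common unfolding ST_def by fastforce
  have "c * card (Q - T) < card {q\<in>Q - T. R p q}" if "p \<in> ST" for p
  proof -
    have "c * card (Q - T) \<le> c * card Q"
      using c Q by (simp add: card_mono)
    moreover have "card {q\<in>Q. R p q} \<le> card {q\<in>Q - T. R p q} + k"
      using card_filter_le_Diff_add[OF Q \<open>finite T\<close>] T(2) by simp
    ultimately show ?thesis
      using Suc.prems that unfolding ST_def by force
  qed
  then obtain q where q: "q \<in> Q - T" "c * card ST \<le> card {p\<in>ST. R p q}"
    using exists_popular_partner[OF \<open>finite ST\<close> \<open>ST \<noteq> {}\<close> _ less_imp_le[OF c]] Q by blast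
  have "{p\<in>S. \<forall>q'\<in>insert q T. R p q'} = {p\<in>ST. R p q}"
    unfolding ST_def by auto
  moreover have "c ^ Suc k * card S \<le> c * card ST"
    using common c unfolding ST_def by simp
  moreover have "card (insert q T) = Suc k"
    using q T \<open>finite T\<close> by simp
  ultimately show ?case
    using q T by (intro exI[of _ "insert q T"]) auto
qed

lemma card_common_partners_ge:
  fixes R :: "'a \<Rightarrow> 'b \<Rightarrow> bool" and m :: real
  assumes "finite P" "finite U" and few_missing: "\<forall>p\<in>P. card {u\<in>U. \<not> R p u} \<le> m"
  shows "card U \<le> card {u\<in>U. \<forall>p\<in>P. R p u} + card P * m"
proof -
  have "U \<subseteq> {u\<in>U. \<forall>p\<in>P. R p u} \<union> (\<Union>p\<in>P. {u\<in>U. \<not> R p u})"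
    by blast
  then have "card U \<le> card ({u\<in>U. \<forall>p\<in>P. R p u} \<union> (\<Union>p\<in>P. {u\<in>U. \<not> R p u}))"
    using assms(1,2) by (intro card_mono) auto
  also have "\<dots> \<le> card {u\<in>U. \<forall>p\<in>P. R p u} + card (\<Union>p\<in>P. {u\<in>U. \<not> R p u})"
    by (rule card_Un_le)
  also have "\<dots> \<le> card {u\<in>U. \<forall>p\<in>P. R p u} + (\<Sum>p\<in>P. card {u\<in>U. \<not> R p u})"
    using card_UN_le[OF assms(1)] by (rule add_left_mono)
  finally have "real (card U) \<le> card {u\<in>U. \<forall>p\<in>P. R p u} + (\<Sum>p\<in>P. real (card {u\<in>U. \<not> R p u}))"
    by (simp flip: of_nat_sum of_nat_add)
  also have "\<dots> \<le> card {u\<in>U. \<forall>p\<in>P. R p u} + card P * m"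
    using sum_mono[of P _ "\<lambda>_. m"] few_missing by fastforce
  finally show ?thesis .
qed

lemma card_common_partners_ge_half:
  fixes R :: "'a \<Rightarrow> 'b \<Rightarrow> bool" and \<delta> :: real
  assumes "finite P" "finite U" "card P * \<delta> \<le> 1 / 2"
    and few_missing: "\<forall>p\<in>P. card {u\<in>U. \<not> R p u} \<le> \<delta> * card U"
  shows "card U / 2 \<le> card {u\<in>U. \<forall>p\<in>P. R p u}"
proof -
  have "card P * \<delta> * card U \<le> 1 / 2 * card U"
    using assms(3) by (intro mult_right_mono) auto
  then show ?thesis
    using card_common_partners_ge[OF assms(1,2) few_missing] by (simp add: mult.assoc)
qed

definition block_threshold :: "nat \<Rightarrow> real \<Rightarrow> real" where
  "block_threshold t c = t / c ^ t"

lemma block_threshold_nonneg: "0 \<le> c \<Longrightarrow> 0 \<le> block_threshold t c"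
  unfolding block_threshold_def by simp

lemma complete_block_if_dense:
  fixes R :: "'a \<Rightarrow> 'b \<Rightarrow> bool" and c :: real
  assumes Q: "finite Q" and S: "finite S" and c: "0 < c"
    and partners: "\<forall>p\<in>S. c * card Q + t \<le> card {q\<in>Q. R p q}"
    and large: "block_threshold t c \<le> card S"
  shows "\<exists>P\<subseteq>S. \<exists>T\<subseteq>Q. card P = t \<and> card T = t \<and> (\<forall>p\<in>P. \<forall>q\<in>T. R p q)"
proof (cases "t = 0")
  case True
  then show ?thesis
    by (metis card.empty empty_iff empty_subsetI)
next
  case False
  then have "0 < block_threshold t c"
    using c unfolding block_threshold_def by (intro divide_pos_pos) auto
  then have "0 < card S"
    using large by linarith
  then have "S \<noteq> {}"
    by auto
  then obtain T where T: "T \<subseteq> Q" "card T = t"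
    and common: "c ^ t * card S \<le> card {p\<in>S. \<forall>q\<in>T. R p q}"
    using greedy_common_partners[OF Q S _ c partners] by blast
  have "t \<le> c ^ t * card S"
    using large c unfolding block_threshold_def by (simp add: field_simps)
  then have "t \<le> card {p\<in>S. \<forall>q\<in>T. R p q}"
    using common by linarith
  then obtain P where "P \<subseteq> {p\<in>S. \<forall>q\<in>T. R p q}" "card P = t"
    by (meson obtain_subset_with_card_n)
  then show ?thesis
    using T by blast
qed

lemma mem_biclaw_V_iff:
  "u \<in> biclaw_V a b \<longleftrightarrow> u = X \<or> u = Y \<or> (\<exists>i\<in>{1..a}. u = XL i) \<or> (\<exists>j\<in>{1..b}. u = YL j)"
  by (auto simp: biclaw_V_def)

definition anticomplete :: "('a \<Rightarrow> 'a \<Rightarrow> bool) \<Rightarrow> 'a set \<Rightarrow> 'a set \<Rightarrow> bool" where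
  "anticomplete E U W \<longleftrightarrow> (\<forall>u\<in>U. \<forall>w\<in>W. \<not> E u w)"

lemma inj_on_case_bcv:
  assumes xl: "inj_on xl {1..a}" and yl: "inj_on yl {1..b}" and "z \<noteq> r"
    and "z \<notin> xl ` {1..a} \<union> yl ` {1..b}" "r \<notin> xl ` {1..a} \<union> yl ` {1..b}"
    and "xl ` {1..a} \<inter> yl ` {1..b} = {}"
  shows "inj_on (case_bcv z r xl yl) (biclaw_V a b)"
proof -
  have xl_ne: "xl i \<noteq> z" "xl i \<noteq> r" if "i \<in> {1..a}" for i
    using that assms(4,5) by auto
  have yl_ne: "yl j \<noteq> z" "yl j \<noteq> r" if "j \<in> {1..b}" for j
    using that assms(4,5) by auto
  have xl_yl_ne: "xl i \<noteq> yl j" if "i \<in> {1..a}" "j \<in> {1..b}" for i j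
    using that assms(6) by (metis disjoint_iff imageI)
  have xl_eq: "xl i = xl i' \<longleftrightarrow> i = i'" if "i \<in> {1..a}" "i' \<in> {1..a}" for i i'
    using xl that by (rule inj_on_eq_iff)
  have yl_eq: "yl j = yl j' \<longleftrightarrow> j = j'" if "j \<in> {1..b}" "j' \<in> {1..b}" for j j'
    using yl that by (rule inj_on_eq_iff)
  show ?thesis
    using \<open>z \<noteq> r\<close>
    by (auto simp: inj_on_def mem_biclaw_V_iff xl_eq yl_eq xl_ne yl_ne xl_yl_ne xl_ne[symmetric]
        yl_ne[symmetric] xl_yl_ne[symmetric])
qed

lemma case_bcv_adj_iff:
  assumes G: "graph V E" and zr: "E z r"
    and xl: "xl ` {1..a} \<subseteq> T" and yl: "yl ` {1..b} \<subseteq> P"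
    and T: "T \<subseteq> nbhd V E r" and P: "P \<subseteq> nbhd V E z"
    and PT: "anticomplete E P T" and indep_z: "anticomplete E (insert z T) (insert z T)"
    and indep_r: "anticomplete E (insert r P) (insert r P)"
    and "u \<in> biclaw_V a b" "v \<in> biclaw_V a b"
  shows "E (case_bcv z r xl yl u) (case_bcv z r xl yl v) \<longleftrightarrow> biclaw_E u v"
proof -
  have sym: "E u v \<Longrightarrow> E v u" and irrefl: "\<not> E v v" for u v
    using G unfolding graph_def by simp_all
  have xl_T: "xl i \<in> T" if "i \<in> {1..a}" for i
    using that xl by (rule image_subset_iff[THEN iffD1, rule_format, rotated])
  have yl_P: "yl j \<in> P" if "j \<in> {1..b}" for j
    using that yl by (rule image_subset_iff[THEN iffD1, rule_format, rotated])
  have adj_yl: "E z (yl j)" "E (yl j) z" if "j \<in> {1..b}" for j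
    using yl_P[OF that] P sym unfolding nbhd_def by auto
  have adj_xl: "E r (xl i)" "E (xl i) r" if "i \<in> {1..a}" for i
    using xl_T[OF that] T sym unfolding nbhd_def by auto
  have nonadj_z: "\<not> E z (xl i)" "\<not> E (xl i) z" if "i \<in> {1..a}" for i
    using xl_T[OF that] indep_z unfolding anticomplete_def by auto
  have nonadj_r: "\<not> E r (yl j)" "\<not> E (yl j) r" if "j \<in> {1..b}" for j
    using yl_P[OF that] indep_r unfolding anticomplete_def by auto
  have nonadj_xl: "\<not> E (xl i) (xl i')" if "i \<in> {1..a}" "i' \<in> {1..a}" for i i'
    using xl_T[OF that(1)] xl_T[OF that(2)] indep_z unfolding anticomplete_def by auto
  have nonadj_yl: "\<not> E (yl j) (yl j')" if "j \<in> {1..b}" "j' \<in> {1..b}" for j j'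
    using yl_P[OF that(1)] yl_P[OF that(2)] indep_r unfolding anticomplete_def by auto
  have nonadj_xl_yl: "\<not> E (yl j) (xl i)" "\<not> E (xl i) (yl j)" if "i \<in> {1..a}" "j \<in> {1..b}" for i j
    using xl_T[OF that(1)] yl_P[OF that(2)] PT sym unfolding anticomplete_def by auto
  show ?thesis
    using \<open>u \<in> biclaw_V a b\<close> \<open>v \<in> biclaw_V a b\<close> unfolding mem_biclaw_V_iff
    by (elim disjE bexE)
      (simp_all add: biclaw_E_def zr sym[OF zr] irrefl adj_xl adj_yl nonadj_z nonadj_r nonadj_xl nonadj_yl
        nonadj_xl_yl)
qed

lemma induced_biclaw_if_anticomplete:
  assumes G: "graph V E" and zr: "E z r"
    and P: "P \<subseteq> nbhd V E z" "card P = t" and T: "T \<subseteq> nbhd V E r" "card T = t"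
    and PT: "anticomplete E P T"
    and indep_z: "anticomplete E (insert z T) (insert z T)"
    and indep_r: "anticomplete E (insert r P) (insert r P)"
  shows "induced_sub (biclaw_V t t) biclaw_E V E"
proof -
  have "finite (nbhd V E v)" for v
    using G unfolding graph_def nbhd_def by simp
  then have "finite P" "finite T"
    using P(1) T(1) finite_subset by blast+
  then obtain xl yl where xl: "bij_betw xl {1..t} T" and yl: "bij_betw yl {1..t} P"
    using ex_bij_betw_nat_finite_1 P(2) T(2) by metis
  have "z \<notin> T" "r \<notin> P"
  proof -
    have "P = {} \<longleftrightarrow> T = {}"
      using P(2) T(2) \<open>finite P\<close> \<open>finite T\<close> by auto
    moreover have "\<not> E p q" "\<not> E q p" if "p \<in> P" "q \<in> T" for p q
      using PT that G unfolding anticomplete_def graph_def by blast+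
    ultimately show "z \<notin> T" "r \<notin> P"
      using P(1) T(1) unfolding nbhd_def by blast+
  qed
  moreover have "z \<notin> P" "r \<notin> T" "z \<noteq> r" "P \<inter> T = {}"
    using G zr P(1) T(1) indep_z unfolding graph_def nbhd_def anticomplete_def by blast+
  ultimately have "inj_on (case_bcv z r xl yl) (biclaw_V t t)"
    using xl yl by (intro inj_on_case_bcv) (auto simp: bij_betw_def)
  moreover have "case_bcv z r xl yl ` biclaw_V t t \<subseteq> V"
  proof -
    have "case_bcv z r xl yl ` biclaw_V t t = {z, r} \<union> T \<union> P"
      using bij_betw_imp_surj_on[OF xl] bij_betw_imp_surj_on[OF yl]
      by (simp add: biclaw_V_def image_Un image_image)
    moreover have "{z, r} \<union> T \<union> P \<subseteq> V"
      using G zr P(1) T(1) unfolding graph_def nbhd_def by blast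
    ultimately show ?thesis
      by simp
  qed
  moreover have "E (case_bcv z r xl yl u) (case_bcv z r xl yl v) \<longleftrightarrow> biclaw_E u v"
    if "u \<in> biclaw_V t t" "v \<in> biclaw_V t t" for u v
    using case_bcv_adj_iff[OF G zr _ _ T(1) P(1) PT indep_z indep_r that]
      bij_betw_imp_surj_on[OF xl] bij_betw_imp_surj_on[OF yl] by blast
  ultimately show ?thesis
    unfolding induced_sub_def by blast
qed

locale bipartite_biclaw_free =
  fixes V :: "'a set" and E :: "'a \<Rightarrow> 'a \<Rightarrow> bool" and A B :: "'a set" and t :: nat
  assumes graph: "graph V E" and bipartite: "bipartition V E A B"
    and biclaw_free: "induced_biclaw_free t V E"
begin

abbreviation N :: "'a \<Rightarrow> 'a set" where
  "N \<equiv> nbhd V E"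

lemma finite_nbhd: "finite (N v)"
  using graph unfolding graph_def nbhd_def by simp

lemma nbhd_subset: "N v \<subseteq> V"
  unfolding nbhd_def by blast

lemma adj_sym: "E u v \<Longrightarrow> E v u"
  using graph unfolding graph_def by simp

lemma adj_in_V: "E u v \<Longrightarrow> u \<in> V \<and> v \<in> V"
  using graph unfolding graph_def by simp

lemma mem_nbhd_iff: "u \<in> N v \<longleftrightarrow> E v u"
  using adj_in_V unfolding nbhd_def by blast

lemma adj_sides: "E u v \<Longrightarrow> u \<in> A \<longleftrightarrow> v \<in> B"
  using bipartite unfolding bipartition_def by blast

lemma sides_disjoint: "A \<inter> B = {}"
  using bipartite unfolding bipartition_def by blast

lemma nonadjacent_if_common_nbr: "E u w \<Longrightarrow> E v w \<Longrightarrow> \<not> E u v"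
  using bipartite unfolding bipartition_def by blast

lemma anticomplete_if_common_nbr: "\<forall>u\<in>U. E u w \<Longrightarrow> anticomplete E U U"
  unfolding anticomplete_def using nonadjacent_if_common_nbr by blast

lemma edge_nbhds_not_anticomplete:
  assumes zr: "E z r" and "P \<subseteq> N z" "card P = t" and "T \<subseteq> N r" "card T = t"
  shows "\<not> anticomplete E P T"
proof
  assume "anticomplete E P T"
  moreover have "anticomplete E (insert z T) (insert z T)"
    using zr \<open>T \<subseteq> N r\<close> adj_sym by (intro anticomplete_if_common_nbr) (auto simp: mem_nbhd_iff)
  moreover have "anticomplete E (insert r P) (insert r P)"
    using zr \<open>P \<subseteq> N z\<close> adj_sym by (intro anticomplete_if_common_nbr) (auto simp: mem_nbhd_iff)
  ultimately have "induced_sub (biclaw_V t t) biclaw_E V E"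
    using induced_biclaw_if_anticomplete[OF graph zr] assms by blast
  then show False
    using biclaw_free unfolding induced_biclaw_free_def by blast
qed

lemma S_set_subset: "S_set V E Xs Ys e \<subseteq> Xs"
  unfolding S_set_def by blast

lemma mem_S_set_iff:
  assumes "Ys \<subseteq> V"
  shows "p \<in> S_set V E Xs Ys e \<longleftrightarrow> p \<in> Xs \<and> e * card Ys \<le> card {q\<in>Ys. \<not> E p q}"
proof -
  have "finite Ys"
    using assms graph finite_subset unfolding graph_def by blast
  have "{q\<in>Ys. \<not> E p q} = Ys - N p \<inter> Ys"
    using assms unfolding nbhd_def by blast
  then have "real (card {q\<in>Ys. \<not> E p q}) = real (card Ys) - real (card (N p \<inter> Ys))"
    using \<open>finite Ys\<close> by (simp add: card_Diff_subset card_mono of_nat_diff)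
  then show ?thesis
    unfolding S_set_def by (auto simp: algebra_simps)
qed

lemma card_nonnbrs_le_if_not_in_S_set:
  fixes e :: real
  assumes "p \<in> Xs" "p \<notin> S_set V E Xs (N v) e"
  shows "card {w\<in>N v. \<not> E p w} \<le> e * card (N v)"
  using assms mem_S_set_iff[OF nbhd_subset, of p Xs v e] by simp

lemma card_S_set_edge_less:
  assumes uv: "E u v" and e: "0 < e" and deg: "t \<le> e / 2 * card (N v)"
  shows "card (S_set V E (N u) (N v) e) < block_threshold t (e / 2)"
proof (rule ccontr)
  define S where "S = S_set V E (N u) (N v) e"
  assume "\<not> ?thesis"
  then have large: "block_threshold t (e / 2) \<le> card S"
    unfolding S_def by simp
  have partners: "\<forall>p\<in>S. e / 2 * card (N v) + t \<le> card {q\<in>N v. \<not> E p q}"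
    using deg mem_S_set_iff[OF nbhd_subset] unfolding S_def by fastforce
  have "S \<subseteq> N u"
    unfolding S_def by (rule S_set_subset)
  then have "finite S"
    by (rule finite_subset[OF _ finite_nbhd])
  have "0 < e / 2"
    using e by simp
  obtain P T where "P \<subseteq> S" and T: "T \<subseteq> N v" "card T = t" and "card P = t"
    and "\<forall>p\<in>P. \<forall>q\<in>T. \<not> E p q"
    using complete_block_if_dense[OF finite_nbhd \<open>finite S\<close> \<open>0 < e / 2\<close> partners large] by blast
  then have "anticomplete E P T" "P \<subseteq> N u"
    using \<open>S \<subseteq> N u\<close> unfolding anticomplete_def by auto
  then show False
    using edge_nbhds_not_anticomplete[OF uv _ \<open>card P = t\<close> T] by blast
qed

lemma typical_sets_joined_by_edge:
  fixes \<delta> :: real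
  assumes xy: "E x y" and \<delta>: "0 < \<delta>" "(t + 1) * \<delta> \<le> 1 / 2"
    and P: "P \<subseteq> Xs" "finite P" "card P \<le> t" "P \<inter> S_set V E Xs (N x) \<delta> = {}"
    and T: "T \<subseteq> Ys" "finite T" "card T \<le> t" "T \<inter> S_set V E Ys (N y) \<delta> = {}"
    and few_atypical: "card (S_set V E (N x) (N y) \<delta>) < card (N x) / 2"
    and "N y \<noteq> {}"
  shows "\<exists>z r. E z r \<and> P \<subseteq> N z \<and> T \<subseteq> N r"
proof -
  have small: "card U * \<delta> \<le> 1 / 2" if "card U \<le> t + 1" for U :: "'a set"
    using \<delta> that by (smt (verit) mult_right_mono of_nat_1 of_nat_add of_nat_mono)
  define Z where "Z = {w\<in>N x. \<forall>p\<in>P. E p w}"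
  have "card (N x) / 2 \<le> card Z"
    unfolding Z_def
  proof (rule card_common_partners_ge_half[OF P(2) finite_nbhd])
    show "card P * \<delta> \<le> 1 / 2"
      using P(3) by (intro small) simp
    show "\<forall>p\<in>P. card {w\<in>N x. \<not> E p w} \<le> \<delta> * card (N x)"
      using P(1,4) card_nonnbrs_le_if_not_in_S_set by blast
  qed
  have "\<not> Z \<subseteq> S_set V E (N x) (N y) \<delta>"
  proof
    assume "Z \<subseteq> S_set V E (N x) (N y) \<delta>"
    then have "card Z \<le> card (S_set V E (N x) (N y) \<delta>)"
      by (rule card_mono[OF finite_subset[OF S_set_subset finite_nbhd]])
    with few_atypical \<open>card (N x) / 2 \<le> card Z\<close> show False
      by linarith
  qed
  then obtain z where z: "z \<in> Z" "z \<notin> S_set V E (N x) (N y) \<delta>"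
    by blast
  define R where "R = {w\<in>N y. \<forall>q\<in>insert z T. E q w}"
  have "card (N y) / 2 \<le> card R"
    unfolding R_def
  proof (rule card_common_partners_ge_half[OF _ finite_nbhd])
    show "finite (insert z T)"
      using T(2) by simp
    show "card (insert z T) * \<delta> \<le> 1 / 2"
      using T(2,3) by (intro small) (simp add: card_insert_if)
    show "\<forall>q\<in>insert z T. card {w\<in>N y. \<not> E q w} \<le> \<delta> * card (N y)"
      using z T(1,4) card_nonnbrs_le_if_not_in_S_set unfolding Z_def by blast
  qed
  moreover have "0 < card (N y)"
    using \<open>N y \<noteq> {}\<close> finite_nbhd by (simp add: card_gt_0_iff)
  ultimately obtain r where "r \<in> R"
    by fastforce
  then have "E z r" "T \<subseteq> N r"
    unfolding R_def using adj_sym mem_nbhd_iff by auto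
  moreover have "P \<subseteq> N z"
    using z(1) adj_sym mem_nbhd_iff unfolding Z_def by auto
  ultimately show ?thesis
    by blast
qed

lemma card_typical_sparse_set_less:
  fixes e \<delta> D :: real
  assumes xy: "E x y" and \<delta>: "0 < \<delta>" "(t + 1) * \<delta> \<le> 1 / 2" and e: "0 < e"
    and deg: "\<forall>v\<in>V. D \<le> card (N v)"
    and D: "t \<le> \<delta> / 2 * D" "block_threshold t (\<delta> / 2) < D / 2"
    and S0: "S0 \<subseteq> Xs" "finite S0" "S0 \<inter> S_set V E Xs (N x) \<delta> = {}"
    and Q: "Q \<subseteq> Ys" "finite Q" "Q \<inter> S_set V E Ys (N y) \<delta> = {}"
    and partners: "\<forall>p\<in>S0. e / 2 * card Q + t \<le> card {q\<in>Q. \<not> E p q}"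
  shows "card S0 < block_threshold t (e / 2)"
proof (rule ccontr)
  assume "\<not> ?thesis"
  moreover have "0 < e / 2"
    using e by simp
  ultimately obtain P T where P: "P \<subseteq> S0" "card P = t" and T: "T \<subseteq> Q" "card T = t"
    and "\<forall>p\<in>P. \<forall>q\<in>T. \<not> E p q"
    using complete_block_if_dense[OF Q(2) S0(2) _ partners] by force
  then have "anticomplete E P T"
    unfolding anticomplete_def by blast
  have deg_x: "D \<le> card (N x)" and deg_y: "D \<le> card (N y)"
    using deg adj_in_V[OF xy] by auto
  have "0 \<le> block_threshold t (\<delta> / 2)"
    using \<delta>(1) by (intro block_threshold_nonneg) simp
  then have "N y \<noteq> {}"
    using D(2) deg_y by fastforce
  have "\<delta> / 2 * D \<le> \<delta> / 2 * card (N y)"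
    using deg_y \<delta>(1) by (intro mult_left_mono) auto
  then have "card (S_set V E (N x) (N y) \<delta>) < block_threshold t (\<delta> / 2)"
    using D(1) by (intro card_S_set_edge_less[OF xy \<delta>(1)]) linarith
  then have "card (S_set V E (N x) (N y) \<delta>) < card (N x) / 2"
    using D(2) deg_x by linarith
  moreover have "P \<subseteq> Xs" "finite P" "card P \<le> t" "P \<inter> S_set V E Xs (N x) \<delta> = {}"
    using P S0 finite_subset by auto
  moreover have "T \<subseteq> Ys" "finite T" "card T \<le> t" "T \<inter> S_set V E Ys (N y) \<delta> = {}"
    using T Q finite_subset by auto
  ultimately obtain z r where "E z r" "P \<subseteq> N z" "T \<subseteq> N r"
    using typical_sets_joined_by_edge[OF xy \<delta>] \<open>N y \<noteq> {}\<close> by meson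
  then show False
    using edge_nbhds_not_anticomplete P(2) T(2) \<open>anticomplete E P T\<close> by blast
qed

lemma card_S_set_transfer_less:
  fixes e \<delta> D K :: real
  assumes xy: "E x y" and "b \<in> V" and e: "0 < e" and \<delta>: "0 < \<delta>" "(t + 1) * \<delta> \<le> 1 / 2"
    and deg: "\<forall>v\<in>V. D \<le> card (N v)"
    and Sa: "card (S_set V E (N a) (N x) \<delta>) \<le> K" and Sb: "card (S_set V E (N b) (N y) \<delta>) \<le> K"
    and D: "K + t \<le> e / 2 * D" "t \<le> \<delta> / 2 * D" "block_threshold t (\<delta> / 2) < D / 2"
  shows "card (S_set V E (N a) (N b) e) < K + block_threshold t (e / 2)"
proof -
  define Sa where "Sa = S_set V E (N a) (N x) \<delta>"
  define Sb where "Sb = S_set V E (N b) (N y) \<delta>"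
  define S0 where "S0 = S_set V E (N a) (N b) e - Sa"
  define Q where "Q = N b - Sb"
  have "finite Sa" "finite Sb" "finite S0" "finite Q"
    unfolding Sa_def Sb_def S0_def Q_def
    using finite_subset[OF S_set_subset finite_nbhd] finite_nbhd by auto
  have partners: "\<forall>p\<in>S0. e / 2 * card Q + t \<le> card {q\<in>Q. \<not> E p q}"
  proof
    fix p
    assume "p \<in> S0"
    then have "e * card (N b) \<le> card {q\<in>N b. \<not> E p q}"
      unfolding S0_def using mem_S_set_iff[OF nbhd_subset] by blast
    also have "\<dots> \<le> card {q\<in>Q. \<not> E p q} + card Sb"
      using card_filter_le_Diff_add[OF finite_nbhd \<open>finite Sb\<close>, where P = "\<lambda>q. \<not> E p q"]
      unfolding Q_def by (simp flip: of_nat_add)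
    finally have "e * card (N b) \<le> card {q\<in>Q. \<not> E p q} + K"
      using Sb unfolding Sb_def by linarith
    moreover have "card Q \<le> card (N b)"
      unfolding Q_def using finite_nbhd by (intro card_mono) auto
    then have "e / 2 * card Q \<le> e / 2 * card (N b)"
      using e by (intro mult_left_mono) auto
    moreover have "e / 2 * D \<le> e / 2 * card (N b)"
      using e deg \<open>b \<in> V\<close> by (intro mult_left_mono) auto
    ultimately show "e / 2 * card Q + t \<le> card {q\<in>Q. \<not> E p q}"
      using D(1) by linarith
  qed
  have "S0 \<subseteq> N a" "S0 \<inter> Sa = {}" "Q \<subseteq> N b" "Q \<inter> Sb = {}"
    unfolding S0_def Q_def using S_set_subset by blast+
  then have "card S0 < block_threshold t (e / 2)"
    using card_typical_sparse_set_less[OF xy \<delta> e deg D(2,3) _ \<open>finite S0\<close> _ _ \<open>finite Q\<close> _ partners]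
    unfolding Sa_def Sb_def by blast
  have "card (S_set V E (N a) (N b) e) \<le> card (S0 \<union> Sa)"
    using \<open>finite S0\<close> \<open>finite Sa\<close> unfolding S0_def by (intro card_mono) auto
  also have "\<dots> \<le> card S0 + card Sa"
    by (rule card_Un_le)
  finally show ?thesis
    using \<open>card S0 < block_threshold t (e / 2)\<close> Sa unfolding Sa_def by linarith
qed

lemma card_S_set_walk3_less:
  fixes e \<delta> D :: real
  assumes walk: "(E OO E OO E) a b" and e: "0 < e" and \<delta>: "0 < \<delta>" "(t + 1) * \<delta> \<le> 1 / 2"
    and deg: "\<forall>v\<in>V. D \<le> card (N v)"
    and D: "block_threshold t (\<delta> / 2) + t \<le> e / 2 * D" "t \<le> \<delta> / 2 * D"
      "block_threshold t (\<delta> / 2) < D / 2"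
  shows "card (S_set V E (N a) (N b) e) < block_threshold t (\<delta> / 2) + block_threshold t (e / 2)"
proof -
  obtain x y where "E a x" "E x y" "E y b"
    using walk by auto
  have deg_edge: "t \<le> \<delta> / 2 * card (N v)" if "E u v" for u v
  proof -
    have "\<delta> / 2 * D \<le> \<delta> / 2 * card (N v)"
      using deg adj_in_V[OF that] \<delta>(1) by (intro mult_left_mono) auto
    then show ?thesis
      using D(2) by linarith
  qed
  have "card (S_set V E (N a) (N x) \<delta>) \<le> block_threshold t (\<delta> / 2)"
    using card_S_set_edge_less[OF \<open>E a x\<close> \<delta>(1) deg_edge[OF \<open>E a x\<close>]] by linarith
  moreover have "card (S_set V E (N b) (N y) \<delta>) \<le> block_threshold t (\<delta> / 2)"
    using card_S_set_edge_less[OF adj_sym[OF \<open>E y b\<close>] \<delta>(1) deg_edge[OF adj_sym[OF \<open>E y b\<close>]]]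
    by linarith
  moreover have "b \<in> V"
    using adj_in_V[OF \<open>E y b\<close>] by blast
  ultimately show ?thesis
    using card_S_set_transfer_less[OF \<open>E x y\<close> _ e \<delta> deg] D by blast
qed

lemma walk3_if_card_S_set_half_less:
  assumes "card (S_set V E (N a) (N b) (1 / 2)) < card (N a)"
  shows "(E OO E OO E) a b"
proof -
  have "\<not> N a \<subseteq> S_set V E (N a) (N b) (1 / 2)"
  proof
    assume "N a \<subseteq> S_set V E (N a) (N b) (1 / 2)"
    then have "card (N a) \<le> card (S_set V E (N a) (N b) (1 / 2))"
      by (rule card_mono[OF finite_subset[OF S_set_subset finite_nbhd]])
    with assms show False
      by simp
  qed
  then obtain p where p: "p \<in> N a" "p \<notin> S_set V E (N a) (N b) (1 / 2)"
    by blast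
  then have "card (N b) / 2 < card (N p \<inter> N b)"
    unfolding S_set_def by auto
  then have "N p \<inter> N b \<noteq> {}"
    by auto
  then obtain q where "q \<in> N p" "q \<in> N b"
    by blast
  then show ?thesis
    using p(1) adj_sym unfolding mem_nbhd_iff by auto
qed

lemma walk3_extend:
  fixes \<delta> D :: real
  assumes walk: "(E OO E OO E) a b" and "E b a'" "E a' b'"
    and \<delta>: "0 < \<delta>" "(t + 1) * \<delta> \<le> 1 / 2"
    and deg: "\<forall>v\<in>V. D \<le> card (N v)"
    and D: "block_threshold t (\<delta> / 2) + t \<le> \<delta> / 2 * D" "block_threshold t (\<delta> / 2) < D / 2"
      "2 * block_threshold t (\<delta> / 2) + t \<le> D / 4"
      "2 * block_threshold t (\<delta> / 2) + block_threshold t (1 / 4) < D"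
  shows "(E OO E OO E) a b'"
proof (rule walk3_if_card_S_set_half_less)
  let ?L = "block_threshold t (\<delta> / 2)"
  have "0 \<le> ?L"
    using \<delta>(1) by (intro block_threshold_nonneg) simp
  then have "t \<le> \<delta> / 2 * D"
    using D(1) by linarith
  have "card (S_set V E (N a) (N b) \<delta>) \<le> 2 * ?L"
    using card_S_set_walk3_less[OF walk \<delta>(1) \<delta> deg D(1) \<open>t \<le> \<delta> / 2 * D\<close> D(2)] by linarith
  moreover have "card (S_set V E (N b') (N a') \<delta>) \<le> 2 * ?L"
  proof -
    have "\<delta> / 2 * D \<le> \<delta> / 2 * card (N a')"
      using deg adj_in_V[OF \<open>E a' b'\<close>] \<delta>(1) by (intro mult_left_mono) auto
    then have "card (S_set V E (N b') (N a') \<delta>) < ?L"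
      using \<open>t \<le> \<delta> / 2 * D\<close> by (intro card_S_set_edge_less[OF adj_sym[OF \<open>E a' b'\<close>] \<delta>(1)]) linarith
    then show ?thesis
      using \<open>0 \<le> ?L\<close> by linarith
  qed
  moreover have "b' \<in> V" "a \<in> V"
    using adj_in_V \<open>E a' b'\<close> walk by auto
  ultimately have "card (S_set V E (N a) (N b') (1 / 2)) < 2 * ?L + block_threshold t (1 / 2 / 2)"
    by (intro card_S_set_transfer_less[OF \<open>E b a'\<close> \<open>b' \<in> V\<close> _ \<delta> deg])
      (use D(2,3) \<open>t \<le> \<delta> / 2 * D\<close> in simp_all)
  also have "\<dots> < D"
    using D(4) by simp
  also have "\<dots> \<le> card (N a)"
    using deg \<open>a \<in> V\<close> by blast
  finally show "card (S_set V E (N a) (N b') (1 / 2)) < card (N a)"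
    by simp
qed

lemma walk3_to_all_of_B:
  assumes conn: "connected_graph V E" and "a \<in> A" "b \<in> B" "N a \<noteq> {}"
    and extend: "\<And>b a' b'. (E OO E OO E) a b \<Longrightarrow> E b a' \<Longrightarrow> E a' b' \<Longrightarrow> (E OO E OO E) a b'"
  shows "(E OO E OO E) a b"
proof -
  obtain b0 where "E a b0"
    using \<open>N a \<noteq> {}\<close> mem_nbhd_iff by blast
  have "(w \<in> B \<longrightarrow> (E OO E OO E) a w) \<and> (w \<in> A \<longrightarrow> (\<exists>b'. (E OO E OO E) a b' \<and> E b' w))"
    if "E\<^sup>*\<^sup>* a w" for w
    using that
  proof (induction rule: rtranclp_induct)
    case base
    \<comment> \<open>the walk a b0 a b0\<close>
    have "(E OO E OO E) a b0"
      using \<open>E a b0\<close> adj_sym by blast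
    moreover have "a \<notin> B"
      using \<open>a \<in> A\<close> sides_disjoint by blast
    ultimately show ?case
      using adj_sym[OF \<open>E a b0\<close>] by blast
  next
    case (step v w)
    show ?case
    proof (intro conjI impI)
      assume "w \<in> B"
      then have "v \<in> A"
        using adj_sides[OF step.hyps(2)] by blast
      then obtain b' where "(E OO E OO E) a b'" "E b' v"
        using step.IH by blast
      then show "(E OO E OO E) a w"
        using extend step.hyps(2) by blast
    next
      assume "w \<in> A"
      then have "v \<in> B"
        using adj_sides[OF adj_sym[OF step.hyps(2)]] by blast
      then show "\<exists>b'. (E OO E OO E) a b' \<and> E b' w"
        using step.IH step.hyps(2) by blast
    qed
  qed
  moreover have "E\<^sup>*\<^sup>* a b"
    using conn \<open>a \<in> A\<close> \<open>b \<in> B\<close> bipartite unfolding connected_graph_def bipartition_def by blast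
  ultimately show ?thesis
    using \<open>b \<in> B\<close> by blast
qed

end

(* (t + 1) * eps_typical t = 1/2: t + 1 vertices, each missing less than an eps_typical t fraction of a
   set, still have common neighbours in half of it. *)
definition eps_typical :: "nat \<Rightarrow> real" where
  "eps_typical t = 1 / (2 * (t + 1))"

definition sparse_budget :: "nat \<Rightarrow> real \<Rightarrow> real" where
  "sparse_budget t e = 2 * block_threshold t (eps_typical t / 2) + block_threshold t (1 / 4)
     + block_threshold t (e / 2) + t + 1"

definition degree_threshold :: "nat \<Rightarrow> real \<Rightarrow> real" where
  "degree_threshold t e = 4 * (t + 1) * sparse_budget t e / e"

lemma degree_threshold_bounds:
  assumes e: "0 < e" "e \<le> 1"
  shows "sparse_budget t e \<le> degree_threshold t e / 4"
    and "sparse_budget t e \<le> e / 2 * degree_threshold t e"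
    and "sparse_budget t e \<le> eps_typical t / 2 * degree_threshold t e"
proof -
  define K where "K = sparse_budget t e"
  have "0 \<le> K"
    using e(1) unfolding K_def sparse_budget_def
    by (simp add: block_threshold_nonneg eps_typical_def add_nonneg_nonneg)
  have "K \<le> K / e"
    using e \<open>0 \<le> K\<close> by (simp add: le_divide_eq mult_left_le)
  have D: "degree_threshold t e = 4 * (t + 1) * (K / e)"
    unfolding degree_threshold_def K_def by simp
  have "4 * K \<le> 4 * (K / e)"
    using \<open>K \<le> K / e\<close> by simp
  also have "\<dots> \<le> 4 * (t + 1) * (K / e)"
    using \<open>0 \<le> K\<close> e(1) by (simp add: mult_left_le algebra_simps)
  finally have "4 * K \<le> degree_threshold t e"
    unfolding D .
  then show "sparse_budget t e \<le> degree_threshold t e / 4"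
    unfolding K_def by linarith
  have "e / 2 * degree_threshold t e = 2 * (t + 1) * K"
    using e(1) unfolding D by (simp add: field_simps)
  then show "sparse_budget t e \<le> e / 2 * degree_threshold t e"
    using \<open>0 \<le> K\<close> unfolding K_def by (simp add: algebra_simps)
  have "eps_typical t / 2 * (4 * (t + 1)) = 1"
    unfolding eps_typical_def by simp
  then have "eps_typical t / 2 * degree_threshold t e = K / e"
    unfolding D by (metis mult.assoc mult_1)
  then show "sparse_budget t e \<le> eps_typical t / 2 * degree_threshold t e"
    using \<open>K \<le> K / e\<close> unfolding K_def by simp
qed

context bipartite_biclaw_free
begin

lemma card_S_set_le_degree_threshold:
  assumes conn: "connected_graph V E" and e: "0 < e" "e < 1"
    and deg: "\<forall>v\<in>V. degree_threshold t e \<le> card (N v)"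
    and "a \<in> A" "b \<in> B"
  shows "card (S_set V E (N a) (N b) e) \<le> degree_threshold t e"
proof -
  define \<delta> where "\<delta> = eps_typical t"
  define D where "D = degree_threshold t e"
  have \<delta>: "0 < \<delta>" "(t + 1) * \<delta> \<le> 1 / 2"
    unfolding \<delta>_def eps_typical_def by simp_all
  have "0 \<le> block_threshold t (\<delta> / 2)" "0 \<le> block_threshold t (1 / 4)" "0 \<le> block_threshold t (e / 2)"
    "0 \<le> real t"
    using \<delta>(1) e(1) by (simp_all add: block_threshold_nonneg)
  moreover note degree_threshold_bounds[OF e(1) less_imp_le[OF e(2)], of t, folded D_def \<delta>_def]
  ultimately have D:
    "block_threshold t (\<delta> / 2) + t \<le> e / 2 * D" "block_threshold t (\<delta> / 2) + t \<le> \<delta> / 2 * D"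
    "t \<le> \<delta> / 2 * D" "block_threshold t (\<delta> / 2) < D / 2" "2 * block_threshold t (\<delta> / 2) + t \<le> D / 4"
    "2 * block_threshold t (\<delta> / 2) + block_threshold t (1 / 4) < D"
    "block_threshold t (\<delta> / 2) + block_threshold t (e / 2) \<le> D"
    unfolding sparse_budget_def \<delta>_def by linarith+
  have "a \<in> V"
    using \<open>a \<in> A\<close> bipartite unfolding bipartition_def by blast
  then have "0 < card (N a)"
    using deg D(4) \<open>0 \<le> block_threshold t (\<delta> / 2)\<close> unfolding D_def by fastforce
  then have "N a \<noteq> {}"
    by auto
  have deg': "\<forall>v\<in>V. D \<le> card (N v)"
    using deg unfolding D_def .
  have "(E OO E OO E) a b"
    using walk3_to_all_of_B[OF conn \<open>a \<in> A\<close> \<open>b \<in> B\<close> \<open>N a \<noteq> {}\<close>]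
      walk3_extend[OF _ _ _ \<delta> deg' D(2,4,5,6)] by blast
  then have "card (S_set V E (N a) (N b) e) < block_threshold t (\<delta> / 2) + block_threshold t (e / 2)"
    using card_S_set_walk3_less[OF _ e(1) \<delta> deg' D(1,3,4)] by blast
  then show ?thesis
    using D(7) unfolding D_def by linarith
qed

end

theorem mainTheorem9:
  "\<exists>C6 :: nat \<Rightarrow> real \<Rightarrow> nat. \<forall>t::nat. \<forall>eps::real.
     \<forall>(V :: nat set) E A B. 0 < t \<longrightarrow> 0 < eps \<longrightarrow> eps < 1 \<longrightarrow>
       graph V E \<longrightarrow> connected_graph V E \<longrightarrow> bipartition V E A B \<longrightarrow>
       min_degree_ge V E (C6 t eps) \<longrightarrow> induced_biclaw_free t V E \<longrightarrow>
       (\<forall>a\<in>A. \<forall>b\<in>B. card (S_set V E (nbhd V E a) (nbhd V E b) eps) \<le> C6 t eps)"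
proof (intro exI[of _ "\<lambda>t e. nat \<lceil>degree_threshold t e\<rceil>"] allI impI ballI)
  fix t :: nat and eps :: real and V :: "nat set" and E A B a b
  assume "0 < eps" "eps < 1" "graph V E" "connected_graph V E" "bipartition V E A B"
    and min_deg: "min_degree_ge V E (nat \<lceil>degree_threshold t eps\<rceil>)"
    and "induced_biclaw_free t V E" "a \<in> A" "b \<in> B"
  interpret bipartite_biclaw_free V E A B t
    by unfold_locales fact+
  have "\<forall>v\<in>V. degree_threshold t eps \<le> card (N v)"
    using min_deg unfolding min_degree_ge_def by simp
  then have "card (S_set V E (N a) (N b) eps) \<le> degree_threshold t eps"
    using card_S_set_le_degree_threshold \<open>connected_graph V E\<close> \<open>0 < eps\<close> \<open>eps < 1\<close> \<open>a \<in> A\<close> \<open>b \<in> B\<close>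
    by blast
  then show "card (S_set V E (N a) (N b) eps) \<le> nat \<lceil>degree_threshold t eps\<rceil>"
    by (metis of_nat_le_iff order_trans real_nat_ceiling_ge)
qed

end
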